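(* Let $O=(W,A,Z,R,RY)$ denote the observed data, with $W$ pre-exposure covariates, $A\in\{0,1\}$ a binary exposure, $Z$ a nonempty set of additional covariates, $R\in\{0,1\}$ a selection indicator, and $Y$ a real outcome observed only when $R=1$; let $(W;Z)$ be an $s$-admissible pair with $Z\neq\emptyset$ and $P$ the observed-data distribution. Let $\pi_A(W)=\Pr(A=1\mid W)$, $\pi_R(W,A,Z)=\Pr(R=1\mid W,A,Z)$, $Q_1(W,A,Z)=\mathbb{E}[Y\mid W,A,Z,R=1]$, $Q_2(W,A)=\mathbb{E}_{Z\mid W,A}Q_1(W,A,Z)$, and let $\psi=\Psi[P]=\mathbb{E}_W[Q_2(W,1)-Q_2(W,0)]$ be the ATE given by the $s$-formula. For putative models $(\tilde Q_1,\tilde Q_2,\tilde\pi_A,\tilde\pi_R)$ define $$\tilde D(O)=\frac{A-\tilde\pi_A(W)}{\tilde\pi_A(W)[1-\tilde\pi_A(W)]}\,\frac{R}{\tilde\pi_R(W,A,Z)}\big[Y-\tilde Q_1(W,A,Z)\big]+\frac{A-\tilde\pi_A(W)}{\tilde\pi_A(W)[1-\tilde\pi_A(W)]}\big[\tilde Q_1(W,A,Z)-\tilde Q_2(W,A)\big]+\tilde Q_2(W,1)-\tilde Q_2(W,0)-\psi,$$ i.e. the EIF of $\Psi$ at $P$ with $(Q_1,Q_2,\pi_A,\pi_R)$ replaced by the putative models while $\psi$ is kept as is. Then $\mathbb{E}_P\tilde D(O)=0$ is a valid (robust) estimating equation for $\psi=\Psi[P]$ (i.e. it holds at the true ATE $\psi$)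 provided at least one of the following holds: (1) the sequential regression models are correctly specified: $\tilde Q_1=Q_1$ and $\tilde Q_2=Q_2$; (2) the exposure and selection propensity score models are correctly specified: $\tilde\pi_A=\pi_A$ and $\tilde\pi_R=\pi_R$; (3) the exposure propensity score model and the mean-imputation model are correctly specified: $\tilde\pi_A=\pi_A$ and $\tilde Q_1=Q_1$.
   Context: An $s$-admissible pair $(W;Z)$ is a pair of covariate sets for which the ATE $\mathbb{E}[Y^{1}-Y^{0}]$ (with $Y^a$ the potential outcome under exposure $a$) is identified from the selected-sample data via the $s$-formula above: $W$ suffices to control confounding of $A$ on $Y$ and $(W,A,Z)$ renders the outcome independent of selection $R$ (so that $Y\perp R\mid W,A,Z$), together with positivity ($0<\pi_A<1$, $\pi_R>0$); the putative propensity models are likewise assumed to satisfy $0<\tilde\pi_A<1$, $\tilde\pi_R>0$. "Correctly specified" means the putative model equals the corresponding true nuisance function. The term $RY$ is well defined even when $Y$ is unobserved since it is multiplied by $R$. *)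

theory Defs
  imports "HOL-Probability.Probability"
begin

text \<open>W :: 'a => 'w (measurable into MW), A :: 'a => real with values in {0,1},
  Z :: 'a => 'z (measurable into MZ), R :: 'a => real with values in {0,1},
  Y :: 'a => real (only R * Y enters).\<close>

definition sigW :: "'a measure \<Rightarrow> ('a \<Rightarrow> 'w) \<Rightarrow> 'w measure \<Rightarrow> 'a measure" where
  "sigW M W MW = vimage_algebra (space M) W MW"

definition sigWA :: "'a measure \<Rightarrow> ('a \<Rightarrow> 'w) \<Rightarrow> 'w measure \<Rightarrow> ('a \<Rightarrow> real) \<Rightarrow> 'a measure" where
  "sigWA M W MW A = vimage_algebra (space M) (\<lambda>x. (W x, A x)) (MW \<Otimes>\<^sub>M borel)"

definition sigWAZ :: "'a measure \<Rightarrow> ('a \<Rightarrow> 'w) \<Rightarrow> 'w measure \<Rightarrow> ('a \<Rightarrow> real)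
    \<Rightarrow> ('a \<Rightarrow> 'z) \<Rightarrow> 'z measure \<Rightarrow> 'a measure" where
  "sigWAZ M W MW A Z MZ = vimage_algebra (space M) (\<lambda>x. (W x, A x, Z x)) (MW \<Otimes>\<^sub>M borel \<Otimes>\<^sub>M MZ)"

definition selected :: "'a measure \<Rightarrow> ('a \<Rightarrow> real) \<Rightarrow> 'a set" where
  "selected M R = {x \<in> space M. R x = 1}"

definition is_piA :: "'a measure \<Rightarrow> ('a \<Rightarrow> 'w) \<Rightarrow> 'w measure \<Rightarrow> ('a \<Rightarrow> real)
    \<Rightarrow> ('w \<Rightarrow> real) \<Rightarrow> bool" where
  "is_piA M W MW A piA \<longleftrightarrow> piA \<in> borel_measurable MW \<and>
     (AE x in M. piA (W x) = real_cond_exp M (sigW M W MW)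
                               (indicator {y \<in> space M. A y = 1}) x)"

definition is_piR :: "'a measure \<Rightarrow> ('a \<Rightarrow> 'w) \<Rightarrow> 'w measure \<Rightarrow> ('a \<Rightarrow> real)
    \<Rightarrow> ('a \<Rightarrow> 'z) \<Rightarrow> 'z measure \<Rightarrow> ('a \<Rightarrow> real) \<Rightarrow> ('w \<times> real \<times> 'z \<Rightarrow> real) \<Rightarrow> bool" where
  "is_piR M W MW A Z MZ R piR \<longleftrightarrow> piR \<in> borel_measurable (MW \<Otimes>\<^sub>M borel \<Otimes>\<^sub>M MZ) \<and>
     (AE x in M. piR (W x, A x, Z x) = real_cond_exp M (sigWAZ M W MW A Z MZ)
                               (indicator (selected M R)) x)"

text \<open>Q_1(W,A,Z) = E[Y | W, A, Z, R = 1]: conditional expectation of Y given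
  (W,A,Z) under P conditioned on the event {R = 1}.\<close>
definition is_Q1 :: "'a measure \<Rightarrow> ('a \<Rightarrow> 'w) \<Rightarrow> 'w measure \<Rightarrow> ('a \<Rightarrow> real)
    \<Rightarrow> ('a \<Rightarrow> 'z) \<Rightarrow> 'z measure \<Rightarrow> ('a \<Rightarrow> real) \<Rightarrow> ('a \<Rightarrow> real)
    \<Rightarrow> ('w \<times> real \<times> 'z \<Rightarrow> real) \<Rightarrow> bool" where
  "is_Q1 M W MW A Z MZ R Y Q1 \<longleftrightarrow> Q1 \<in> borel_measurable (MW \<Otimes>\<^sub>M borel \<Otimes>\<^sub>M MZ) \<and>
     (AE x in uniform_measure M (selected M R).
        Q1 (W x, A x, Z x) = real_cond_exp (uniform_measure M (selected M R))
                               (sigWAZ M W MW A Z MZ) Y x)"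

definition is_Q2 :: "'a measure \<Rightarrow> ('a \<Rightarrow> 'w) \<Rightarrow> 'w measure \<Rightarrow> ('a \<Rightarrow> real)
    \<Rightarrow> ('a \<Rightarrow> 'z) \<Rightarrow> ('w \<times> real \<times> 'z \<Rightarrow> real) \<Rightarrow> ('w \<times> real \<Rightarrow> real) \<Rightarrow> bool" where
  "is_Q2 M W MW A Z Q1 Q2 \<longleftrightarrow> Q2 \<in> borel_measurable (MW \<Otimes>\<^sub>M borel) \<and>
     (AE x in M. Q2 (W x, A x) = real_cond_exp M (sigWA M W MW A)
                               (\<lambda>y. Q1 (W y, A y, Z y)) x)"

definition Psi :: "'a measure \<Rightarrow> ('a \<Rightarrow> 'w) \<Rightarrow> ('w \<times> real \<Rightarrow> real) \<Rightarrow> real" where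
  "Psi M W Q2 = (\<integral>x. Q2 (W x, 1) - Q2 (W x, 0) \<partial>M)"

definition Hw :: "('w \<Rightarrow> real) \<Rightarrow> 'w \<Rightarrow> real \<Rightarrow> real" where
  "Hw piA w a = (a - piA w) / (piA w * (1 - piA w))"

definition Dtilde :: "('a \<Rightarrow> 'w) \<Rightarrow> ('a \<Rightarrow> real) \<Rightarrow> ('a \<Rightarrow> 'z) \<Rightarrow> ('a \<Rightarrow> real) \<Rightarrow> ('a \<Rightarrow> real)
    \<Rightarrow> ('w \<times> real \<times> 'z \<Rightarrow> real) \<Rightarrow> ('w \<times> real \<Rightarrow> real) \<Rightarrow> ('w \<Rightarrow> real)
    \<Rightarrow> ('w \<times> real \<times> 'z \<Rightarrow> real) \<Rightarrow> real \<Rightarrow> 'a \<Rightarrow> real" where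
  "Dtilde W A Z R Y tQ1 tQ2 tpiA tpiR psi x =
     Hw tpiA (W x) (A x) * (R x / tpiR (W x, A x, Z x)) * (Y x - tQ1 (W x, A x, Z x))
     + Hw tpiA (W x) (A x) * (tQ1 (W x, A x, Z x) - tQ2 (W x, A x))
     + tQ2 (W x, 1) - tQ2 (W x, 0) - psi"

end

theory Submission
  imports Defs
begin

(* Every term of the mean of D~ is rewritten with one of four identities of the observed-data
   law: the tower property on the selected subpopulation, E[R g(W,A,Z) Y] = E[R g(W,A,Z) Q_1];
   the tower property E[h(W,A) Q_1] = E[h(W,A) Q_2]; inverse weighting by the selection
   propensity, E[R f(W,A,Z) / pi_R] = E[f(W,A,Z)]; and inverse weighting by the exposure
   propensity, E[(A - pi_A) / (pi_A (1 - pi_A)) f(W,A)] = E[f(W,1) - f(W,0)].  Under each of the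
   three specifications, the identities that are available make the terms cancel in pairs, the
   last pair being E[Q_2(W,1) - Q_2(W,0)] against psi. *)

lemma sigma_finite_subalgebra_vimage_algebra:
  assumes "finite_measure M" and "T \<in> measurable M N"
  shows "sigma_finite_subalgebra M (vimage_algebra (space M) T N)"
proof -
  have "finite_measure_subalgebra M (vimage_algebra (space M) T N)"
    unfolding finite_measure_subalgebra_def finite_measure_subalgebra_axioms_def subalgebra_def
    using assms(1) sets_image_in_sets[OF refl assms(2)] by simp
  then show ?thesis by (rule finite_measure_subalgebra_is_sigma_finite)
qed

lemma
  assumes "finite_measure M" and T: "T \<in> measurable M N" and h: "h \<in> borel_measurable N"
    and q: "q \<in> borel_measurable M" and g: "g \<in> borel_measurable M"
    and q_eq: "AE x in M. q x = real_cond_exp M (vimage_algebra (space M) T N) g x"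
    and int: "integrable M (\<lambda>x. h (T x) * g x)"
  shows integrable_mult_cond_exp_vimage: "integrable M (\<lambda>x. h (T x) * q x)"
    and integral_mult_cond_exp_vimage: "(\<integral>x. h (T x) * q x \<partial>M) = (\<integral>x. h (T x) * g x \<partial>M)"
proof -
  let ?F = "vimage_algebra (space M) T N"
  interpret sigma_finite_subalgebra M ?F
    using sigma_finite_subalgebra_vimage_algebra[OF assms(1) T] .
  have "T \<in> measurable ?F N"
    by (rule measurable_vimage_algebra1) (use measurable_space[OF T] in blast)
  then have hT: "(\<lambda>x. h (T x)) \<in> borel_measurable ?F"
    using h by measurable
  have hTM: "(\<lambda>x. h (T x)) \<in> borel_measurable M"
    using T h by measurable
  have ae: "AE x in M. h (T x) * q x = h (T x) * real_cond_exp M ?F g x"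
    using q_eq by eventually_elim simp
  have meas: "(\<lambda>x. h (T x) * q x) \<in> borel_measurable M"
    "(\<lambda>x. h (T x) * real_cond_exp M ?F g x) \<in> borel_measurable M"
    using hTM q by measurable
  show "integrable M (\<lambda>x. h (T x) * q x)"
    using integrable_cong_AE[OF meas ae] real_cond_exp_intg(1)[OF int hT g] by simp
  show "(\<integral>x. h (T x) * q x \<partial>M) = (\<integral>x. h (T x) * g x \<partial>M)"
    using integral_cong_AE[OF meas ae] real_cond_exp_intg(2)[OF int hT g] by simp
qed

lemma
  assumes "finite_measure M" and T: "T \<in> measurable M N" and E: "E \<in> sets M"
    and p: "p \<in> borel_measurable N" and f: "f \<in> borel_measurable N"
    and p_eq: "AE x in M. p (T x) = real_cond_exp M (vimage_algebra (space M) T N) (indicator E) x"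
    and p_nonzero: "\<And>x. x \<in> space M \<Longrightarrow> p (T x) \<noteq> 0"
    and int: "integrable M (\<lambda>x. f (T x) / p (T x) * indicator E x)"
  shows integrable_inverse_weighting: "integrable M (\<lambda>x. f (T x))"
    and integral_inverse_weighting:
      "(\<integral>x. f (T x) / p (T x) * indicator E x \<partial>M) = (\<integral>x. f (T x) \<partial>M)"
proof -
  have fp: "(\<lambda>t. f t / p t) \<in> borel_measurable N" using f p by measurable
  have pT: "(\<lambda>x. p (T x)) \<in> borel_measurable M" using T p by measurable
  have cancel: "f (T x) / p (T x) * p (T x) = f (T x)" if "x \<in> space M" for x
    using p_nonzero[OF that] by simp
  note weighted = integrable_mult_cond_exp_vimage[OF assms(1) T fp pT _ p_eq int]
    integral_mult_cond_exp_vimage[OF assms(1) T fp pT _ p_eq int]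
  note weighted = weighted[OF borel_measurable_indicator[OF E]]
  show "integrable M (\<lambda>x. f (T x))"
    by (rule Bochner_Integration.integrable_cong[THEN iffD1, OF refl _ weighted(1)]) (rule cancel)
  have "(\<integral>x. f (T x) / p (T x) * p (T x) \<partial>M) = (\<integral>x. f (T x) \<partial>M)"
    by (intro Bochner_Integration.integral_cong refl cancel)
  then show "(\<integral>x. f (T x) / p (T x) * indicator E x \<partial>M) = (\<integral>x. f (T x) \<partial>M)"
    using weighted(2) by simp
qed

lemma
  fixes f :: "'a \<Rightarrow> real"
  assumes S: "S \<in> sets M" and S_pos: "emeasure M S \<noteq> 0" and S_fin: "emeasure M S \<noteq> \<top>"
    and f: "f \<in> borel_measurable M"
  shows integrable_uniform_measure_iff:
      "integrable (uniform_measure M S) f \<longleftrightarrow> integrable M (\<lambda>x. indicator S x * f x)"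
    and integral_uniform_measure:
      "integral\<^sup>L (uniform_measure M S) f = (\<integral>x. indicator S x * f x \<partial>M) / measure M S"
proof -
  let ?c = "measure M S"
  have S_eq: "emeasure M S = ennreal ?c"
    using S_fin by (simp add: emeasure_eq_ennreal_measure)
  then have c: "?c > 0" using S_pos measure_nonneg[of M S] by (auto simp: less_le)
  have "indicator S x / ennreal ?c = ennreal (indicator S x / ?c)" for x
    using c by (auto simp: divide_ennreal[of 1, simplified] split: split_indicator)
  then have density: "uniform_measure M S = density M (\<lambda>x. ennreal (indicator S x / ?c))"
    by (simp add: uniform_measure_def S_eq)
  have dens_meas: "(\<lambda>x. indicator S x / ?c) \<in> borel_measurable M" using S by measurable
  have dens_nonneg: "AE x in M. 0 \<le> indicator S x / ?c" by simp
  have scale: "(\<lambda>x. (indicator S x / ?c) *\<^sub>R f x) = (\<lambda>x. (1 / ?c) * (indicator S x * f x))"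
    by auto
  show "integrable (uniform_measure M S) f \<longleftrightarrow> integrable M (\<lambda>x. indicator S x * f x)"
    unfolding density integrable_density[OF f dens_meas dens_nonneg] scale integrable_mult_left_iff
    using c by simp
  show "integral\<^sup>L (uniform_measure M S) f = (\<integral>x. indicator S x * f x \<partial>M) / ?c"
    unfolding density integral_density[OF f dens_meas dens_nonneg]
    by (simp flip: integral_divide_zero)
qed

lemma integral_indicator_mult_cond_exp_uniform_measure:
  assumes T: "T \<in> measurable M N" and S: "S \<in> sets M"
    and S_pos: "emeasure M S \<noteq> 0" and S_fin: "emeasure M S \<noteq> \<top>"
    and h: "h \<in> borel_measurable N" and Y: "Y \<in> borel_measurable M" and q: "q \<in> borel_measurable M"
    and q_eq: "AE x in uniform_measure M S.
      q x = real_cond_exp (uniform_measure M S) (vimage_algebra (space M) T N) Y x"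
    and int: "integrable M (\<lambda>x. indicator S x * (h (T x) * Y x))"
  shows "(\<integral>x. indicator S x * (h (T x) * q x) \<partial>M) = (\<integral>x. indicator S x * (h (T x) * Y x) \<partial>M)"
proof -
  let ?U = "uniform_measure M S"
  have U: "finite_measure ?U"
    using prob_space_uniform_measure[of M S] S_pos S_fin by (simp add: prob_space_def)
  have TU: "T \<in> measurable ?U N" and YU: "Y \<in> borel_measurable ?U" and qU: "q \<in> borel_measurable ?U"
    using T Y q by (simp_all cong: measurable_cong_sets)
  have hTY: "(\<lambda>x. h (T x) * Y x) \<in> borel_measurable M" and hTq: "(\<lambda>x. h (T x) * q x) \<in> borel_measurable M"
    using T h Y q by measurable
  have "integrable ?U (\<lambda>x. h (T x) * Y x)"
    using integrable_uniform_measure_iff[OF S S_pos S_fin hTY] int by simp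
  then have "(\<integral>x. h (T x) * q x \<partial>?U) = (\<integral>x. h (T x) * Y x \<partial>?U)"
    using integral_mult_cond_exp_vimage[OF U TU h qU YU] q_eq by simp
  moreover have "measure M S \<noteq> 0"
    using S_pos S_fin by (simp add: emeasure_eq_ennreal_measure)
  ultimately show ?thesis
    using integral_uniform_measure[OF S S_pos S_fin hTY] integral_uniform_measure[OF S S_pos S_fin hTq]
    by simp
qed

locale observed_data_model =
  fixes M :: "'a measure"
    and W :: "'a \<Rightarrow> 'w" and MW :: "'w measure"
    and Z :: "'a \<Rightarrow> 'z" and MZ :: "'z measure"
    and A R Y :: "'a \<Rightarrow> real"
    and piA :: "'w \<Rightarrow> real"
    and piR Q1 :: "'w \<times> real \<times> 'z \<Rightarrow> real"
    and Q2 :: "'w \<times> real \<Rightarrow> real"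
  assumes P: "prob_space M"
    and W_meas[measurable]: "W \<in> measurable M MW"
    and Z_meas[measurable]: "Z \<in> measurable M MZ"
    and A_meas[measurable]: "A \<in> borel_measurable M" and A_bin: "\<forall>x\<in>space M. A x \<in> {0, 1}"
    and R_meas[measurable]: "R \<in> borel_measurable M" and R_bin: "\<forall>x\<in>space M. R x \<in> {0, 1}"
    and Y_meas[measurable]: "Y \<in> borel_measurable M"
    and piA_def: "is_piA M W MW A piA"
    and piR_def: "is_piR M W MW A Z MZ R piR"
    and Q1_def: "is_Q1 M W MW A Z MZ R Y Q1"
    and Q2_def: "is_Q2 M W MW A Z Q1 Q2"
    and pos_A: "\<forall>w\<in>space MW. 0 < piA w \<and> piA w < 1"
    and pos_R: "\<forall>t\<in>space (MW \<Otimes>\<^sub>M borel \<Otimes>\<^sub>M MZ). 0 < piR t"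
begin

sublocale prob_space M by (fact P)

lemma piA_meas[measurable]: "piA \<in> borel_measurable MW"
  using piA_def by (simp add: is_piA_def)

lemma piR_meas[measurable]: "piR \<in> borel_measurable (MW \<Otimes>\<^sub>M borel \<Otimes>\<^sub>M MZ)"
  using piR_def by (simp add: is_piR_def)

lemma Q1_meas[measurable]: "Q1 \<in> borel_measurable (MW \<Otimes>\<^sub>M borel \<Otimes>\<^sub>M MZ)"
  using Q1_def by (simp add: is_Q1_def)

lemma Q2_meas[measurable]: "Q2 \<in> borel_measurable (MW \<Otimes>\<^sub>M borel)"
  using Q2_def by (simp add: is_Q2_def)

lemma covariates_meas[measurable]: "(\<lambda>x. (W x, A x, Z x)) \<in> measurable M (MW \<Otimes>\<^sub>M borel \<Otimes>\<^sub>M MZ)"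
  by measurable

lemma exposure_covariates_meas[measurable]: "(\<lambda>x. (W x, A x)) \<in> measurable M (MW \<Otimes>\<^sub>M borel)"
  by measurable

lemma selected_sets[measurable]: "selected M R \<in> sets M"
  unfolding selected_def by measurable

lemma R_eq_indicator_selected: "x \<in> space M \<Longrightarrow> R x = indicator (selected M R) x"
  using R_bin by (auto simp: selected_def split: split_indicator)

(* Conditioning on the selected event, as in the definition of Q_1, needs it to be non-null. *)
lemma emeasure_selected_nonzero: "emeasure M (selected M R) \<noteq> 0"
proof
  let ?F = "sigWAZ M W MW A Z MZ"
  assume "emeasure M (selected M R) = 0"
  then have "AE x in M. x \<notin> selected M R"
    by (intro AE_not_in) auto
  then have "AE x in M. indicator (selected M R) x = (0::real)"
    by eventually_elim simp
  interpret sigma_finite_subalgebra M ?F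
    unfolding sigWAZ_def
    by (rule sigma_finite_subalgebra_vimage_algebra[OF finite_measure_axioms covariates_meas])
  have "AE x in M. real_cond_exp M ?F (indicator (selected M R)) x = real_cond_exp M ?F (\<lambda>_. 0) x"
    by (rule real_cond_exp_cong) (use \<open>AE x in M. indicator (selected M R) x = 0\<close> in auto)
  moreover have "AE x in M. real_cond_exp M ?F (\<lambda>_. 0::real) x = 0"
    by (rule real_cond_exp_F_meas) auto
  moreover have "AE x in M. piR (W x, A x, Z x) = real_cond_exp M ?F (indicator (selected M R)) x"
    using piR_def by (simp add: is_piR_def)
  moreover have "AE x in M. 0 < piR (W x, A x, Z x)"
    using pos_R measurable_space[OF covariates_meas] by auto
  ultimately have "AE x in M. False" by eventually_elim auto
  then show False by simp
qed

lemma integral_selected_Q1: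
  assumes h: "h \<in> borel_measurable MW" and b: "b \<in> borel_measurable (MW \<Otimes>\<^sub>M borel \<Otimes>\<^sub>M MZ)"
    and int: "integrable M (\<lambda>x. Hw h (W x) (A x) * (R x / b (W x, A x, Z x)) * Y x)"
  shows "(\<integral>x. Hw h (W x) (A x) * (R x / b (W x, A x, Z x)) * Q1 (W x, A x, Z x) \<partial>M)
       = (\<integral>x. Hw h (W x) (A x) * (R x / b (W x, A x, Z x)) * Y x \<partial>M)"
proof -
  define c where "c t = Hw h (fst t) (fst (snd t)) / b t" for t
  have c: "c \<in> borel_measurable (MW \<Otimes>\<^sub>M borel \<Otimes>\<^sub>M MZ)"
    unfolding c_def Hw_def using h b by measurable
  have weight: "Hw h (W x) (A x) * (R x / b (W x, A x, Z x)) * f x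
      = indicator (selected M R) x * (c (W x, A x, Z x) * f x)" if "x \<in> space M" for x f
    using R_eq_indicator_selected[OF that] by (simp add: c_def)
  have Q1_eq: "AE x in uniform_measure M (selected M R). Q1 (W x, A x, Z x) =
      real_cond_exp (uniform_measure M (selected M R))
        (vimage_algebra (space M) (\<lambda>x. (W x, A x, Z x)) (MW \<Otimes>\<^sub>M borel \<Otimes>\<^sub>M MZ)) Y x"
    using Q1_def by (simp add: is_Q1_def sigWAZ_def)
  have "integrable M (\<lambda>x. indicator (selected M R) x * (c (W x, A x, Z x) * Y x))"
    by (rule Bochner_Integration.integrable_cong[THEN iffD1, OF refl _ int]) (rule weight)
  note tower = integral_indicator_mult_cond_exp_uniform_measure[OF covariates_meas selected_sets
      emeasure_selected_nonzero emeasure_finite c Y_meas _ Q1_eq this]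
  have "(\<integral>x. Hw h (W x) (A x) * (R x / b (W x, A x, Z x)) * Q1 (W x, A x, Z x) \<partial>M)
      = (\<integral>x. indicator (selected M R) x * (c (W x, A x, Z x) * Q1 (W x, A x, Z x)) \<partial>M)"
    by (intro Bochner_Integration.integral_cong refl weight)
  also have "\<dots> = (\<integral>x. indicator (selected M R) x * (c (W x, A x, Z x) * Y x) \<partial>M)"
    by (rule tower) measurable
  also have "\<dots> = (\<integral>x. Hw h (W x) (A x) * (R x / b (W x, A x, Z x)) * Y x \<partial>M)"
    by (intro Bochner_Integration.integral_cong refl weight[symmetric])
  finally show ?thesis .
qed

lemma integral_Q1_eq_Q2:
  assumes h: "h \<in> borel_measurable MW"
    and int: "integrable M (\<lambda>x. Hw h (W x) (A x) * Q1 (W x, A x, Z x))"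
  shows "(\<integral>x. Hw h (W x) (A x) * Q1 (W x, A x, Z x) \<partial>M)
       = (\<integral>x. Hw h (W x) (A x) * Q2 (W x, A x) \<partial>M)"
proof -
  have weight_meas: "case_prod (Hw h) \<in> borel_measurable (MW \<Otimes>\<^sub>M borel)"
    unfolding Hw_def using h by measurable
  have Q2_eq: "AE x in M. Q2 (W x, A x) = real_cond_exp M
      (vimage_algebra (space M) (\<lambda>x. (W x, A x)) (MW \<Otimes>\<^sub>M borel)) (\<lambda>x. Q1 (W x, A x, Z x)) x"
    using Q2_def by (simp add: is_Q2_def sigWA_def)
  show ?thesis
    using integral_mult_cond_exp_vimage[OF finite_measure_axioms exposure_covariates_meas
        weight_meas _ _ Q2_eq] int
    by simp
qed

lemma integral_selected_div_piR:
  assumes h: "h \<in> borel_measurable MW" and f: "f \<in> borel_measurable (MW \<Otimes>\<^sub>M borel \<Otimes>\<^sub>M MZ)"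
    and int: "integrable M (\<lambda>x. Hw h (W x) (A x) * (R x / piR (W x, A x, Z x)) * f (W x, A x, Z x))"
  shows "(\<integral>x. Hw h (W x) (A x) * (R x / piR (W x, A x, Z x)) * f (W x, A x, Z x) \<partial>M)
       = (\<integral>x. Hw h (W x) (A x) * f (W x, A x, Z x) \<partial>M)"
proof -
  define g where "g t = Hw h (fst t) (fst (snd t)) * f t" for t
  have g: "g \<in> borel_measurable (MW \<Otimes>\<^sub>M borel \<Otimes>\<^sub>M MZ)"
    unfolding g_def Hw_def using h f by measurable
  have weight: "Hw h (W x) (A x) * (R x / piR (W x, A x, Z x)) * f (W x, A x, Z x)
      = g (W x, A x, Z x) / piR (W x, A x, Z x) * indicator (selected M R) x" if "x \<in> space M" for x
    using R_eq_indicator_selected[OF that] by (simp add: g_def)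
  have piR_eq: "AE x in M. piR (W x, A x, Z x) = real_cond_exp M
      (vimage_algebra (space M) (\<lambda>x. (W x, A x, Z x)) (MW \<Otimes>\<^sub>M borel \<Otimes>\<^sub>M MZ)) (indicator (selected M R)) x"
    using piR_def by (simp add: is_piR_def sigWAZ_def)
  have piR_nonzero: "piR (W x, A x, Z x) \<noteq> 0" if "x \<in> space M" for x
    using pos_R measurable_space[OF covariates_meas that] by fastforce
  have "integrable M (\<lambda>x. g (W x, A x, Z x) / piR (W x, A x, Z x) * indicator (selected M R) x)"
    by (rule Bochner_Integration.integrable_cong[THEN iffD1, OF refl _ int]) (rule weight)
  note inverse_weighting = integral_inverse_weighting[OF finite_measure_axioms covariates_meas
      selected_sets piR_meas g piR_eq piR_nonzero this]
  have "(\<integral>x. Hw h (W x) (A x) * (R x / piR (W x, A x, Z x)) * f (W x, A x, Z x) \<partial>M)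
      = (\<integral>x. g (W x, A x, Z x) / piR (W x, A x, Z x) * indicator (selected M R) x \<partial>M)"
    by (intro Bochner_Integration.integral_cong refl weight)
  also have "\<dots> = (\<integral>x. Hw h (W x) (A x) * f (W x, A x, Z x) \<partial>M)"
    using inverse_weighting by (simp add: g_def)
  finally show ?thesis .
qed

lemma AE_one_minus_piA:
  "AE x in M. 1 - piA (W x) = real_cond_exp M (sigW M W MW) (indicator {x \<in> space M. A x = 0}) x"
proof -
  let ?F = "sigW M W MW" and ?E1 = "{x \<in> space M. A x = 1}"
  interpret sigma_finite_subalgebra M ?F
    unfolding sigW_def by (rule sigma_finite_subalgebra_vimage_algebra[OF finite_measure_axioms W_meas])
  have "AE x in M. real_cond_exp M ?F (indicator {x \<in> space M. A x = 0}) x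
      = real_cond_exp M ?F (\<lambda>x. 1 - indicator ?E1 x) x"
    by (rule real_cond_exp_cong) (use A_bin in \<open>auto split: split_indicator\<close>)
  moreover have "AE x in M. real_cond_exp M ?F (\<lambda>x. 1 - indicator ?E1 x) x
      = real_cond_exp M ?F (\<lambda>_. 1) x - real_cond_exp M ?F (indicator ?E1) x"
    by (rule real_cond_exp_diff) (auto intro!: integrable_real_indicator simp: less_top[symmetric])
  moreover have "AE x in M. real_cond_exp M ?F (\<lambda>_. 1) x = 1"
    by (rule real_cond_exp_F_meas) auto
  moreover have "AE x in M. piA (W x) = real_cond_exp M ?F (indicator ?E1) x"
    using piA_def by (simp add: is_piA_def)
  ultimately show ?thesis by eventually_elim simp
qed

lemma integral_Hw_piA:
  assumes f[measurable]: "f \<in> borel_measurable (MW \<Otimes>\<^sub>M borel)"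
    and int: "integrable M (\<lambda>x. Hw piA (W x) (A x) * f (W x, A x))"
  shows "(\<integral>x. Hw piA (W x) (A x) * f (W x, A x) \<partial>M) = Psi M W f"
proof -
  let ?E1 = "{x \<in> space M. A x = 1}" and ?E0 = "{x \<in> space M. A x = 0}"
  let ?f1 = "\<lambda>w. f (w, 1)" and ?f0 = "\<lambda>w. - f (w, 0)"
  have E1[measurable]: "?E1 \<in> sets M" by measurable
  have E0[measurable]: "?E0 \<in> sets M" by measurable
  have f1: "?f1 \<in> borel_measurable MW" by measurable
  have f0: "?f0 \<in> borel_measurable MW" by measurable
  have one_minus_piA: "(\<lambda>w. 1 - piA w) \<in> borel_measurable MW" by measurable
  have piA_bounds: "0 < piA (W x)" "piA (W x) < 1" if "x \<in> space M" for x
    using pos_A measurable_space[OF W_meas that] by auto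
  have piA_nonzero: "piA (W x) \<noteq> 0" and one_minus_piA_nonzero: "1 - piA (W x) \<noteq> 0"
    if "x \<in> space M" for x
    using piA_bounds[OF that] by simp_all
  have treated: "Hw piA (W x) (A x) * f (W x, A x) * indicator ?E1 x = ?f1 (W x) / piA (W x) * indicator ?E1 x"
    and control: "Hw piA (W x) (A x) * f (W x, A x) * indicator ?E0 x = ?f0 (W x) / (1 - piA (W x)) * indicator ?E0 x"
    if "x \<in> space M" for x
    using piA_bounds[OF that] by (auto simp: Hw_def field_simps split: split_indicator)
  have int1: "integrable M (\<lambda>x. ?f1 (W x) / piA (W x) * indicator ?E1 x)"
    by (rule Bochner_Integration.integrable_cong[THEN iffD1, OF refl _ integrable_real_mult_indicator[OF E1 int]])
      (rule treated)
  have int0: "integrable M (\<lambda>x. ?f0 (W x) / (1 - piA (W x)) * indicator ?E0 x)"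
    by (rule Bochner_Integration.integrable_cong[THEN iffD1, OF refl _ integrable_real_mult_indicator[OF E0 int]])
      (rule control)
  have piA_eq: "AE x in M. piA (W x) = real_cond_exp M (vimage_algebra (space M) W MW) (indicator ?E1) x"
    using piA_def by (simp add: is_piA_def sigW_def)
  have one_minus_piA_eq:
    "AE x in M. 1 - piA (W x) = real_cond_exp M (vimage_algebra (space M) W MW) (indicator ?E0) x"
    using AE_one_minus_piA by (simp add: sigW_def)
  note weighting = integrable_inverse_weighting integral_inverse_weighting
  note treated_weighting =
    weighting[OF finite_measure_axioms W_meas E1 piA_meas f1 piA_eq piA_nonzero int1]
  note control_weighting =
    weighting[OF finite_measure_axioms W_meas E0 one_minus_piA f0 one_minus_piA_eq one_minus_piA_nonzero int0]
  have "Hw piA (W x) (A x) * f (W x, A x) = ?f1 (W x) / piA (W x) * indicator ?E1 x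
      + ?f0 (W x) / (1 - piA (W x)) * indicator ?E0 x" if "x \<in> space M" for x
    using A_bin treated[OF that] control[OF that] that by (auto split: split_indicator)
  then have "(\<integral>x. Hw piA (W x) (A x) * f (W x, A x) \<partial>M)
      = (\<integral>x. ?f1 (W x) / piA (W x) * indicator ?E1 x + ?f0 (W x) / (1 - piA (W x)) * indicator ?E0 x \<partial>M)"
    by (intro Bochner_Integration.integral_cong refl)
  also have "\<dots> = (\<integral>x. ?f1 (W x) \<partial>M) + (\<integral>x. ?f0 (W x) \<partial>M)"
    using Bochner_Integration.integral_add[OF int1 int0] treated_weighting(2) control_weighting(2)
    by simp
  also have "\<dots> = Psi M W f"
    unfolding Psi_def using treated_weighting(1) control_weighting(1) by simp
  finally show ?thesis .
qed

end

(* No positivity is required of the putative propensities: their values matter only in the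
   cases where they coincide with the true ones. *)
locale putative_nuisance_models = observed_data_model +
  fixes tpiA :: "'w \<Rightarrow> real"
    and tpiR tQ1 :: "'w \<times> real \<times> 'z \<Rightarrow> real"
    and tQ2 :: "'w \<times> real \<Rightarrow> real"
  assumes tpiA_meas[measurable]: "tpiA \<in> borel_measurable MW"
    and tpiR_meas[measurable]: "tpiR \<in> borel_measurable (MW \<Otimes>\<^sub>M borel \<Otimes>\<^sub>M MZ)"
    and tQ1_meas[measurable]: "tQ1 \<in> borel_measurable (MW \<Otimes>\<^sub>M borel \<Otimes>\<^sub>M MZ)"
    and tQ2_meas[measurable]: "tQ2 \<in> borel_measurable (MW \<Otimes>\<^sub>M borel)"
    and int_tQ2: "\<And>a. a \<in> {0, 1} \<Longrightarrow> integrable M (\<lambda>x. tQ2 (W x, a))"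
    and int_GY: "integrable M (\<lambda>x. Hw tpiA (W x) (A x) * (R x / tpiR (W x, A x, Z x)) * Y x)"
    and int_GtQ1: "integrable M (\<lambda>x. Hw tpiA (W x) (A x) * (R x / tpiR (W x, A x, Z x)) * tQ1 (W x, A x, Z x))"
    and int_GQ1: "integrable M (\<lambda>x. Hw tpiA (W x) (A x) * (R x / tpiR (W x, A x, Z x)) * Q1 (W x, A x, Z x))"
    and int_HtQ1: "integrable M (\<lambda>x. Hw tpiA (W x) (A x) * tQ1 (W x, A x, Z x))"
    and int_HQ1: "integrable M (\<lambda>x. Hw tpiA (W x) (A x) * Q1 (W x, A x, Z x))"
    and int_HtQ2: "integrable M (\<lambda>x. Hw tpiA (W x) (A x) * tQ2 (W x, A x))"
    and int_HQ2: "integrable M (\<lambda>x. Hw tpiA (W x) (A x) * Q2 (W x, A x))"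
begin

lemma integral_Dtilde:
  "(\<integral>x. Dtilde W A Z R Y tQ1 tQ2 tpiA tpiR psi x \<partial>M)
     = (\<integral>x. Hw tpiA (W x) (A x) * (R x / tpiR (W x, A x, Z x)) * Y x \<partial>M)
     - (\<integral>x. Hw tpiA (W x) (A x) * (R x / tpiR (W x, A x, Z x)) * tQ1 (W x, A x, Z x) \<partial>M)
     + (\<integral>x. Hw tpiA (W x) (A x) * tQ1 (W x, A x, Z x) \<partial>M)
     - (\<integral>x. Hw tpiA (W x) (A x) * tQ2 (W x, A x) \<partial>M)
     + Psi M W tQ2 - psi"
proof -
  have "integrable M (\<lambda>x. tQ2 (W x, 1))" "integrable M (\<lambda>x. tQ2 (W x, 0))"
    by (simp_all add: int_tQ2)
  then show ?thesis
    unfolding Dtilde_def Psi_def right_diff_distrib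
    using int_GY int_GtQ1 int_HtQ1 int_HtQ2 prob_space by (simp add: algebra_simps)
qed

lemma integral_Dtilde_zero_if_regressions_correct:
  assumes "tQ1 = Q1" and "tQ2 = Q2"
  shows "(\<integral>x. Dtilde W A Z R Y tQ1 tQ2 tpiA tpiR (Psi M W Q2) x \<partial>M) = 0"
  using integral_Dtilde integral_selected_Q1[OF tpiA_meas tpiR_meas int_GY]
    integral_Q1_eq_Q2[OF tpiA_meas int_HQ1] assms by simp

lemma integral_Dtilde_zero_if_propensities_correct:
  assumes "tpiA = piA" and "tpiR = piR"
  shows "(\<integral>x. Dtilde W A Z R Y tQ1 tQ2 tpiA tpiR (Psi M W Q2) x \<partial>M) = 0"
proof -
  note int = int_GY int_GQ1 int_GtQ1 int_HQ1 int_HQ2 int_HtQ2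
  note int = int[unfolded assms]
  have "(\<integral>x. Hw piA (W x) (A x) * (R x / piR (W x, A x, Z x)) * Y x \<partial>M)
      = (\<integral>x. Hw piA (W x) (A x) * (R x / piR (W x, A x, Z x)) * Q1 (W x, A x, Z x) \<partial>M)"
    using integral_selected_Q1[OF piA_meas piR_meas int(1)] ..
  also have "\<dots> = (\<integral>x. Hw piA (W x) (A x) * Q1 (W x, A x, Z x) \<partial>M)"
    by (rule integral_selected_div_piR[OF piA_meas Q1_meas int(2)])
  also have "\<dots> = (\<integral>x. Hw piA (W x) (A x) * Q2 (W x, A x) \<partial>M)"
    by (rule integral_Q1_eq_Q2[OF piA_meas int(4)])
  also have "\<dots> = Psi M W Q2"
    by (rule integral_Hw_piA[OF Q2_meas int(5)])
  finally show ?thesis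
    using integral_Dtilde integral_selected_div_piR[OF piA_meas tQ1_meas int(3)]
      integral_Hw_piA[OF tQ2_meas int(6)] assms by simp
qed

lemma integral_Dtilde_zero_if_exposure_and_imputation_correct:
  assumes "tpiA = piA" and "tQ1 = Q1"
  shows "(\<integral>x. Dtilde W A Z R Y tQ1 tQ2 tpiA tpiR (Psi M W Q2) x \<partial>M) = 0"
proof -
  note int = int_GY int_HQ1 int_HQ2 int_HtQ2
  note int = int[unfolded assms]
  have "(\<integral>x. Hw piA (W x) (A x) * Q1 (W x, A x, Z x) \<partial>M) = Psi M W Q2"
    using integral_Q1_eq_Q2[OF piA_meas int(2)] integral_Hw_piA[OF Q2_meas int(3)] by simp
  then show ?thesis
    using integral_Dtilde integral_selected_Q1[OF piA_meas tpiR_meas int(1)]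
      integral_Hw_piA[OF tQ2_meas int(4)] assms by simp
qed

end

theorem mainTheorem2:
  fixes M :: "'a measure"
    and W :: "'a \<Rightarrow> 'w" and MW :: "'w measure"
    and Z :: "'a \<Rightarrow> 'z" and MZ :: "'z measure"
    and A R Y :: "'a \<Rightarrow> real"
    and piA tpiA :: "'w \<Rightarrow> real"
    and piR tpiR Q1 tQ1 :: "'w \<times> real \<times> 'z \<Rightarrow> real"
    and Q2 tQ2 :: "'w \<times> real \<Rightarrow> real"
  assumes P: "prob_space M"
    and W_meas: "W \<in> measurable M MW"
    and Z_meas: "Z \<in> measurable M MZ"
    and A_meas: "A \<in> borel_measurable M" and A_bin: "\<forall>x\<in>space M. A x \<in> {0, 1}"
    and R_meas: "R \<in> borel_measurable M" and R_bin: "\<forall>x\<in>space M. R x \<in> {0, 1}"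
    and Y_meas: "Y \<in> borel_measurable M"
    (* true nuisance functions *)
    and piA_def: "is_piA M W MW A piA"
    and piR_def: "is_piR M W MW A Z MZ R piR"
    and Q1_def: "is_Q1 M W MW A Z MZ R Y Q1"
    and Q2_def: "is_Q2 M W MW A Z Q1 Q2"
    (* positivity *)
    and pos_A: "\<forall>w\<in>space MW. 0 < piA w \<and> piA w < 1"
    and pos_R: "\<forall>t\<in>space (MW \<Otimes>\<^sub>M borel \<Otimes>\<^sub>M MZ). 0 < piR t"
    (* putative models *)
    and tpiA_meas: "tpiA \<in> borel_measurable MW"
    and tpiR_meas: "tpiR \<in> borel_measurable (MW \<Otimes>\<^sub>M borel \<Otimes>\<^sub>M MZ)"
    and tQ1_meas: "tQ1 \<in> borel_measurable (MW \<Otimes>\<^sub>M borel \<Otimes>\<^sub>M MZ)"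
    and tQ2_meas: "tQ2 \<in> borel_measurable (MW \<Otimes>\<^sub>M borel)"
    and tpos_A: "\<forall>w. 0 < tpiA w \<and> tpiA w < 1"
    and tpos_R: "\<forall>t. 0 < tpiR t"
    (* integrability (finite means of the terms involved) *)
    and int_RY: "integrable M (\<lambda>x. R x * Y x)"
    and int_Q1: "integrable M (\<lambda>x. Q1 (W x, A x, Z x))"
    and int_Q2: "\<And>a. a \<in> {0, 1} \<Longrightarrow> integrable M (\<lambda>x. Q2 (W x, a))"
    and int_tQ2: "\<And>a. a \<in> {0, 1} \<Longrightarrow> integrable M (\<lambda>x. tQ2 (W x, a))"
    and int_GY: "integrable M (\<lambda>x. Hw tpiA (W x) (A x) * (R x / tpiR (W x, A x, Z x)) * Y x)"
    and int_GtQ1: "integrable M (\<lambda>x. Hw tpiA (W x) (A x) * (R x / tpiR (W x, A x, Z x)) * tQ1 (W x, A x, Z x))"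
    and int_GQ1: "integrable M (\<lambda>x. Hw tpiA (W x) (A x) * (R x / tpiR (W x, A x, Z x)) * Q1 (W x, A x, Z x))"
    and int_HtQ1: "integrable M (\<lambda>x. Hw tpiA (W x) (A x) * tQ1 (W x, A x, Z x))"
    and int_HQ1: "integrable M (\<lambda>x. Hw tpiA (W x) (A x) * Q1 (W x, A x, Z x))"
    and int_HtQ2: "integrable M (\<lambda>x. Hw tpiA (W x) (A x) * tQ2 (W x, A x))"
    and int_HQ2: "integrable M (\<lambda>x. Hw tpiA (W x) (A x) * Q2 (W x, A x))"
    (* at least one of the three correct-specification conditions *)
    and spec: "(tQ1 = Q1 \<and> tQ2 = Q2) \<or> (tpiA = piA \<and> tpiR = piR) \<or> (tpiA = piA \<and> tQ1 = Q1)"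
  shows "(\<integral>x. Dtilde W A Z R Y tQ1 tQ2 tpiA tpiR (Psi M W Q2) x \<partial>M) = 0"
proof -
  interpret putative_nuisance_models M W MW Z MZ A R Y piA piR Q1 Q2 tpiA tpiR tQ1 tQ2
    by (intro putative_nuisance_models.intro observed_data_model.intro
        putative_nuisance_models_axioms.intro) (fact assms)+
  from spec show ?thesis
    using integral_Dtilde_zero_if_regressions_correct integral_Dtilde_zero_if_propensities_correct
      integral_Dtilde_zero_if_exposure_and_imputation_correct by blast
qed

end
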